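(* Let $M:\mathbb S\to\mathbb Q_{>0}$ be a recursive positive rational supermartingale for the interval forecast $\{1/2\}$, let $y>0$ be a real number, and let $s\in\mathbb S$ be a situation such that $M(t)\le y$ for every prefix $t$ of $s$ (including $s$ itself and the empty string). Then there is a recursive path $\omega\in\Omega$ with $\omega_{1:|s|}=s$ and $M(\omega_{1:n})\le y$ for all $n\in\mathbb N_0$.
   Context: $\mathcal X=\{0,1\}$, $\Omega=\mathcal X^{\mathbb N}$ (paths), $\mathbb S=\bigcup_{n\ge0}\mathcal X^n$ (finite binary strings), $|s|$ the length, $\omega_{1:n}=(\omega_1,\dots,\omega_n)$. A process $M:\mathbb S\to\mathbb R$ is a supermartingale for $\{1/2\}$ if $\tfrac12M(s1)+\tfrac12M(s0)\le M(s)$ for all $s\in\mathbb S$. $M$ is recursive rational if $s\mapsto M(s)\in\mathbb Q$ is computable by a Turing machine. A path $\omega$ is recursive if $n\mapsto\omega_n$ is computable by a Turing machine. *)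

theory Defs
  imports Complex_Main
begin

text \<open>By the Church-Turing thesis
(Kleene's theorem) these are exactly the total functions computable by a Turing machine.\<close>

inductive recfn :: "nat \<Rightarrow> (nat list \<Rightarrow> nat) \<Rightarrow> bool" where
  rf_zero: "recfn n (\<lambda>xs. 0)"
| rf_succ: "recfn 1 (\<lambda>xs. Suc (hd xs))"
| rf_proj: "i < n \<Longrightarrow> recfn n (\<lambda>xs. xs ! i)"
| rf_comp: "recfn m g \<Longrightarrow> length fs = m \<Longrightarrow> (\<forall>f\<in>set fs. recfn n f)
            \<Longrightarrow> recfn n (\<lambda>xs. g (map (\<lambda>f. f xs) fs))"
| rf_prim: "recfn n g \<Longrightarrow> recfn (Suc (Suc n)) h
            \<Longrightarrow> recfn (Suc n) (\<lambda>xs. rec_nat (g (tl xs)) (\<lambda>k acc. h (k # acc # tl xs)) (hd xs))"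
| rf_min: "recfn (Suc n) g \<Longrightarrow> (\<forall>xs. length xs = n \<longrightarrow> (\<exists>y. g (y # xs) = 0))
            \<Longrightarrow> recfn n (\<lambda>xs. LEAST y. g (y # xs) = 0)"

definition computable :: "(nat \<Rightarrow> nat) \<Rightarrow> bool" where
  "computable f \<longleftrightarrow> (\<exists>g. recfn 1 g \<and> (\<forall>x. g [x] = f x))"

text \<open>Finite binary strings are bool lists (True = 1), new symbols appended at the end.
A path \<omega> is a function nat \<Rightarrow> bool, \<omega> i standing for \<omega>_(i+1).\<close>

definition prefix_of :: "(nat \<Rightarrow> bool) \<Rightarrow> nat \<Rightarrow> bool list" where
  "prefix_of \<omega> n = map \<omega> [0..<n]"

fun enc_str :: "bool list \<Rightarrow> nat" where
  "enc_str [] = 0"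
| "enc_str (b # bs) = 2 * enc_str bs + (if b then 2 else 1)"

definition recursive_path :: "(nat \<Rightarrow> bool) \<Rightarrow> bool" where
  "recursive_path \<omega> \<longleftrightarrow> computable (\<lambda>n. if \<omega> n then 1 else 0)"

definition recursive_rational :: "(bool list \<Rightarrow> real) \<Rightarrow> bool" where
  "recursive_rational M \<longleftrightarrow>
     (\<exists>p q d. computable p \<and> computable q \<and> computable d \<and>
        (\<forall>s. d (enc_str s) > 0 \<and>
             M s = (real (p (enc_str s)) - real (q (enc_str s))) / real (d (enc_str s))))"

definition supermartingale_half :: "(bool list \<Rightarrow> real) \<Rightarrow> bool" where
  "supermartingale_half M \<longleftrightarrow>
     (\<forall>s. (1/2) * M (s @ [True]) + (1/2) * M (s @ [False]) \<le> M s)"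

end

theory Submission
  imports Defs
begin

text \<open>Follow \<open>s\<close>, and from then on always move to the child with the smaller value
of \<open>M\<close>. By the supermartingale inequality the smaller child is at most the average of
the two children, hence at most the parent, so \<open>M\<close> never rises above \<open>y\<close> along the
path. The path is recursive: which child is smaller is decided by comparing two rationals
\<open>(p - q) / d\<close> computed from the codes of the children, and the code of the next prefix
is obtained from the previous one by primitive recursion.\<close>

section \<open>Total recursive functions\<close>

definition total_recursive :: "nat \<Rightarrow> (nat list \<Rightarrow> nat) \<Rightarrow> bool" where
  "total_recursive k F \<longleftrightarrow>
     (\<exists>g. recfn k g \<and> (\<forall>xs. length xs = k \<longrightarrow> g xs = F xs))"

lemma total_recursive_cong:
  "total_recursive k F \<Longrightarrow> (\<And>xs. length xs = k \<Longrightarrow> F xs = G xs) \<Longrightarrow>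
   total_recursive k G"
  unfolding total_recursive_def by metis

lemma total_recursive_zero: "total_recursive k (\<lambda>_. 0)"
  unfolding total_recursive_def using rf_zero by blast

lemma total_recursive_proj: "i < k \<Longrightarrow> total_recursive k (\<lambda>xs. xs ! i)"
  unfolding total_recursive_def using rf_proj by blast

lemma total_recursive_Suc1: "total_recursive 1 (\<lambda>xs. Suc (xs ! 0))"
  unfolding total_recursive_def
  using rf_succ by (metis hd_conv_nth list.size(3) zero_neq_one)

lemma total_recursive_comp:
  assumes "total_recursive m G" "length Fs = m" "\<forall>F\<in>set Fs. total_recursive n F"
  shows "total_recursive n (\<lambda>xs. G (map (\<lambda>F. F xs) Fs))"
proof -
  obtain g where g: "recfn m g" "\<forall>xs. length xs = m \<longrightarrow> g xs = G xs"
    using assms(1) unfolding total_recursive_def by auto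
  have "\<exists>gs. length gs = length Fs \<and> (\<forall>g\<in>set gs. recfn n g) \<and>
     (\<forall>xs. length xs = n \<longrightarrow> map (\<lambda>g. g xs) gs = map (\<lambda>F. F xs) Fs)"
    using assms(3)
  proof (induction Fs)
    case (Cons F Fs)
    then obtain gs where "length gs = length Fs" "\<forall>g\<in>set gs. recfn n g"
      "\<forall>xs. length xs = n \<longrightarrow> map (\<lambda>g. g xs) gs = map (\<lambda>F. F xs) Fs" by auto
    moreover obtain f where "recfn n f" "\<forall>xs. length xs = n \<longrightarrow> f xs = F xs"
      using Cons.prems unfolding total_recursive_def by auto
    ultimately show ?case
      by (intro exI[of _ "f # gs"]) auto
  qed simp
  then obtain gs where gs: "length gs = length Fs" "\<forall>g\<in>set gs. recfn n g"
    "\<forall>xs. length xs = n \<longrightarrow> map (\<lambda>g. g xs) gs = map (\<lambda>F. F xs) Fs"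
    by blast
  have "recfn n (\<lambda>xs. g (map (\<lambda>f. f xs) gs))"
    using g gs assms(2) by (intro rf_comp) auto
  moreover have "\<forall>xs. length xs = n \<longrightarrow> g (map (\<lambda>f. f xs) gs) = G (map (\<lambda>F. F xs) Fs)"
    using g gs assms(2) by auto
  ultimately show ?thesis
    unfolding total_recursive_def by blast
qed

lemma total_recursive_prim_rec:
  assumes "total_recursive n G" "total_recursive (Suc (Suc n)) H"
  shows "total_recursive (Suc n)
           (\<lambda>xs. rec_nat (G (tl xs)) (\<lambda>k acc. H (k # acc # tl xs)) (hd xs))"
proof -
  obtain g where g: "recfn n g" "\<forall>xs. length xs = n \<longrightarrow> g xs = G xs"
    using assms(1) unfolding total_recursive_def by auto
  obtain h where h: "recfn (Suc (Suc n)) h" "\<forall>xs. length xs = Suc (Suc n) \<longrightarrow> h xs = H xs"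
    using assms(2) unfolding total_recursive_def by auto
  have "rec_nat (g (tl xs)) (\<lambda>k acc. h (k # acc # tl xs)) m =
        rec_nat (G (tl xs)) (\<lambda>k acc. H (k # acc # tl xs)) m"
    if "length xs = Suc n" for xs m
    using that g h by (induction m) auto
  with g h show ?thesis
    unfolding total_recursive_def by (blast intro: rf_prim)
qed

lemma total_recursive_comp1:
  "total_recursive 1 (\<lambda>xs. f (xs ! 0)) \<Longrightarrow> total_recursive n F \<Longrightarrow>
   total_recursive n (\<lambda>xs. f (F xs))"
  using total_recursive_comp[of 1 "\<lambda>xs. f (xs ! 0)" "[F]" n] by simp

lemma total_recursive_comp2:
  "total_recursive 2 (\<lambda>xs. f (xs ! 0) (xs ! 1)) \<Longrightarrow> total_recursive n F \<Longrightarrow>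
   total_recursive n G \<Longrightarrow> total_recursive n (\<lambda>xs. f (F xs) (G xs))"
  using total_recursive_comp[of 2 "\<lambda>xs. f (xs ! 0) (xs ! 1)" "[F, G]" n] by simp

lemma total_recursive_Suc: "total_recursive n F \<Longrightarrow> total_recursive n (\<lambda>xs. Suc (F xs))"
  using total_recursive_comp1[OF total_recursive_Suc1] .

lemma total_recursive_const: "total_recursive n (\<lambda>_. c)"
  by (induction c) (auto intro: total_recursive_zero total_recursive_Suc)

lemma total_recursive_prim_rec1:
  assumes "total_recursive 2 (\<lambda>xs. h (xs ! 0) (xs ! 1))"
  shows "total_recursive 1 (\<lambda>xs. rec_nat a h (xs ! 0))"
proof -
  have "total_recursive 1 (\<lambda>xs. rec_nat a (\<lambda>k acc. h k acc) (hd xs))"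
    using total_recursive_prim_rec[OF total_recursive_const, of 0 "\<lambda>xs. h (xs ! 0) (xs ! 1)" a]
      assms by (simp add: numeral_eq_Suc)
  then show ?thesis
    by (rule total_recursive_cong) (subst hd_conv_nth; auto)
qed

lemma total_recursive_prim_rec2:
  assumes "total_recursive 1 (\<lambda>xs. g (xs ! 0))"
    and "total_recursive 3 (\<lambda>xs. h (xs ! 0) (xs ! 1) (xs ! 2))"
  shows "total_recursive 2 (\<lambda>xs. rec_nat (g (xs ! 1)) (\<lambda>k acc. h k acc (xs ! 1)) (xs ! 0))"
proof -
  have "total_recursive 2 (\<lambda>xs. rec_nat (g (tl xs ! 0)) (\<lambda>k acc. h k acc (tl xs ! 0)) (hd xs))"
    using total_recursive_prim_rec[of 1 "\<lambda>xs. g (xs ! 0)" "\<lambda>xs. h (xs ! 0) (xs ! 1) (xs ! 2)"]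
      assms by (simp add: numeral_eq_Suc)
  then show ?thesis
    by (rule total_recursive_cong) (subst hd_conv_nth; auto simp: nth_tl)
qed

lemma total_recursive_add:
  assumes "total_recursive n F" "total_recursive n G"
  shows "total_recursive n (\<lambda>xs. F xs + G xs)"
proof -
  have "rec_nat b (\<lambda>k acc. Suc acc) a = a + b" for a b :: nat
    by (induction a) auto
  then have "total_recursive 2 (\<lambda>xs. xs ! 0 + xs ! 1)"
    using total_recursive_prim_rec2[of "\<lambda>b. b" "\<lambda>k acc b. Suc acc"]
      total_recursive_proj[of 0 1] total_recursive_Suc[OF total_recursive_proj[of 1 3]]
    by simp
  then show ?thesis
    using total_recursive_comp2 assms by blast
qed

lemma total_recursive_mult:
  assumes "total_recursive n F" "total_recursive n G"
  shows "total_recursive n (\<lambda>xs. F xs * G xs)"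
proof -
  have "rec_nat 0 (\<lambda>k acc. acc + b) a = a * b" for a b :: nat
    by (induction a) auto
  then have "total_recursive 2 (\<lambda>xs. xs ! 0 * xs ! 1)"
    using total_recursive_prim_rec2[of "\<lambda>b. 0" "\<lambda>k acc b. acc + b"] total_recursive_zero
      total_recursive_add[OF total_recursive_proj[of 1 3] total_recursive_proj[of 2 3]]
    by simp
  then show ?thesis
    using total_recursive_comp2 assms by blast
qed

lemma total_recursive_diff:
  assumes "total_recursive n F" "total_recursive n G"
  shows "total_recursive n (\<lambda>xs. F xs - G xs)"
proof -
  have "rec_nat 0 (\<lambda>k acc. k) a = a - 1" for a :: nat
    by (induction a) auto
  then have pred: "total_recursive 1 (\<lambda>xs. xs ! 0 - 1)"
    using total_recursive_prim_rec1[of "\<lambda>k acc. k" 0] total_recursive_proj[of 0 2] by simp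
  have "rec_nat a (\<lambda>k acc. acc - 1) b = a - b" for a b :: nat
    by (induction b) auto
  then have "total_recursive 2 (\<lambda>xs. xs ! 1 - xs ! 0)"
    using total_recursive_prim_rec2[of "\<lambda>a. a" "\<lambda>k acc a. acc - 1"] total_recursive_proj[of 0 1]
      total_recursive_comp1[OF pred total_recursive_proj[of 1 3]]
    by simp
  then have "total_recursive 2 (\<lambda>xs. xs ! 0 - xs ! 1)"
    using total_recursive_comp2[of "\<lambda>b a. a - b" 2 "\<lambda>xs. xs ! 1" "\<lambda>xs. xs ! 0"]
    by (simp add: total_recursive_proj)
  then show ?thesis
    using total_recursive_comp2 assms by blast
qed

lemma total_recursive_if_le:
  assumes "total_recursive n A" "total_recursive n B" "total_recursive n F" "total_recursive n G"
  shows "total_recursive n (\<lambda>xs. if A xs \<le> B xs then F xs else G xs)"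
proof -
  \<comment> \<open>In truncated arithmetic \<open>1 - (A xs - B xs)\<close> is the indicator of \<open>A xs \<le> B xs\<close>.\<close>
  let ?le = "\<lambda>xs. 1 - (A xs - B xs)"
  have "total_recursive n (\<lambda>xs. ?le xs * F xs + (1 - ?le xs) * G xs)"
    using assms by (intro total_recursive_add total_recursive_mult total_recursive_diff
        total_recursive_const)
  then show ?thesis
    by (rule total_recursive_cong) auto
qed

lemma total_recursive_pow2:
  assumes "total_recursive n F"
  shows "total_recursive n (\<lambda>xs. 2 ^ F xs)"
proof -
  have "rec_nat 1 (\<lambda>k acc. acc + acc) a = (2::nat) ^ a" for a
    by (induction a) auto
  then have "total_recursive 1 (\<lambda>xs. 2 ^ (xs ! 0))"
    using total_recursive_prim_rec1[of "\<lambda>k acc. acc + acc" 1]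
      total_recursive_add[OF total_recursive_proj[of 1 2] total_recursive_proj[of 1 2]]
    by simp
  then show ?thesis
    using total_recursive_comp1 assms by blast
qed

lemma computable_iff_total_recursive: "computable f \<longleftrightarrow> total_recursive 1 (\<lambda>xs. f (xs ! 0))"
proof
  assume "computable f"
  then obtain g where "recfn 1 g" "\<And>x. g [x] = f x"
    unfolding computable_def by blast
  moreover have "xs = [xs ! 0]" if "length xs = 1" for xs :: "nat list"
    using that by (cases xs) auto
  ultimately show "total_recursive 1 (\<lambda>xs. f (xs ! 0))"
    unfolding total_recursive_def by metis
next
  assume "total_recursive 1 (\<lambda>xs. f (xs ! 0))"
  then show "computable f"
    unfolding total_recursive_def computable_def by fastforce
qed

lemma total_recursive_computable:
  "computable f \<Longrightarrow> total_recursive n F \<Longrightarrow> total_recursive n (\<lambda>xs. f (F xs))"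
  by (simp add: computable_iff_total_recursive total_recursive_comp1)

lemma total_recursive_lookup:
  fixes ns :: "nat list"
  shows "total_recursive 1 (\<lambda>xs. if xs ! 0 < length ns then ns ! (xs ! 0) else 0)"
proof (induction ns)
  case Nil
  then show ?case by (simp add: total_recursive_zero)
next
  case (Cons m ns)
  have "(if a < length (m # ns) then (m # ns) ! a else 0) =
        rec_nat m (\<lambda>k acc. if k < length ns then ns ! k else 0) a" for a
    by (cases a) auto
  then show ?case
    using total_recursive_prim_rec1[of "\<lambda>k acc. if k < length ns then ns ! k else 0" m]
      total_recursive_comp1[OF Cons.IH total_recursive_proj[of 0 2]]
    by simp
qed

lemma recursive_rational_le_decidable:
  assumes "recursive_rational M"
  obtains le :: "nat \<Rightarrow> nat \<Rightarrow> nat" where "total_recursive 2 (\<lambda>xs. le (xs ! 0) (xs ! 1))"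
    and "\<And>s t. 0 < le (enc_str s) (enc_str t) \<longleftrightarrow> M s \<le> M t"
proof -
  obtain p q d where p: "computable p" and q: "computable q" and d: "computable d"
    and M: "\<And>s. d (enc_str s) > 0 \<and>
      M s = (real (p (enc_str s)) - real (q (enc_str s))) / real (d (enc_str s))"
    using assms unfolding recursive_rational_def by blast
  define le :: "nat \<Rightarrow> nat \<Rightarrow> nat"
    where "le x z = (if p x * d z + q z * d x \<le> p z * d x + q x * d z then 1 else 0)" for x z
  have le_recursive: "total_recursive 2 (\<lambda>xs. le (xs ! 0) (xs ! 1))"
    unfolding le_def
    by (intro total_recursive_if_le total_recursive_add total_recursive_mult total_recursive_const
        total_recursive_computable[OF p] total_recursive_computable[OF q]
        total_recursive_computable[OF d] total_recursive_proj) simp_all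
  have cross_multiply: "(a - b) / e \<le> (a' - b') / e' \<longleftrightarrow> a * e' + b' * e \<le> a' * e + b * e'"
    if "e > 0" "e' > 0" for a b e a' b' e' :: real
    using that by (simp add: field_simps)
  have le_iff: "0 < le (enc_str s) (enc_str t) \<longleftrightarrow> M s \<le> M t" for s t
  proof -
    let ?x = "enc_str s" and ?z = "enc_str t"
    have "M s \<le> M t \<longleftrightarrow>
        real (p ?x) * real (d ?z) + real (q ?z) * real (d ?x)
        \<le> real (p ?z) * real (d ?x) + real (q ?x) * real (d ?z)"
      using M[of s] M[of t] cross_multiply by simp
    then show ?thesis
      unfolding le_def by (simp only: of_nat_mult[symmetric] of_nat_add[symmetric] of_nat_le_iff) simp
  qed
  show ?thesis
    using that le_recursive le_iff by blast
qed

section \<open>Paths built bit by bit\<close>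

lemma length_prefix_of [simp]: "length (prefix_of \<omega> n) = n"
  by (simp add: prefix_of_def)

lemma prefix_of_0 [simp]: "prefix_of \<omega> 0 = []"
  by (simp add: prefix_of_def)

lemma prefix_of_Suc: "prefix_of \<omega> (Suc n) = prefix_of \<omega> n @ [\<omega> n]"
  by (simp add: prefix_of_def)

lemma enc_str_snoc: "enc_str (bs @ [b]) = enc_str bs + 2 ^ length bs * (if b then 2 else 1)"
  by (induction bs) auto

lemma exists_path_next_bit_rule: "\<exists>\<omega>. \<forall>n. \<omega> n \<longleftrightarrow> P n (prefix_of \<omega> n)"
proof -
  define pre where "pre n = rec_nat [] (\<lambda>k t. t @ [P k t]) n" for n
  define \<omega> where "\<omega> n = P n (pre n)" for n
  have "prefix_of \<omega> n = pre n" for n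
  proof (induction n)
    case 0
    then show ?case by (simp add: pre_def)
  next
    case (Suc n)
    then show ?case by (simp add: prefix_of_Suc pre_def \<omega>_def)
  qed
  then have "\<omega> n \<longleftrightarrow> P n (prefix_of \<omega> n)" for n
    by (simp add: \<omega>_def)
  then show ?thesis
    by blast
qed

lemma recursive_path_if_next_bit_recursive:
  assumes rec: "total_recursive 2 (\<lambda>xs. b (xs ! 0) (xs ! 1))"
    and next_bit: "\<And>n. \<omega> n \<longleftrightarrow> 0 < b n (enc_str (prefix_of \<omega> n))"
  shows "recursive_path \<omega>"
proof -
  define step where "step k x = x + 2 ^ k * (if 1 \<le> b k x then 2 else 1)" for k x
  have code: "enc_str (prefix_of \<omega> n) = rec_nat 0 step n" for n
  proof (induction n)
    case (Suc n)
    then show ?case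
      using next_bit[of n] by (simp add: prefix_of_Suc enc_str_snoc step_def Suc_le_eq)
  qed simp
  have "total_recursive 2 (\<lambda>xs. step (xs ! 0) (xs ! 1))"
    unfolding step_def
    by (intro total_recursive_add total_recursive_mult total_recursive_pow2 total_recursive_if_le
        total_recursive_const total_recursive_proj total_recursive_comp2[OF rec]) simp_all
  then have "total_recursive 1 (\<lambda>xs. rec_nat 0 step (xs ! 0))"
    by (rule total_recursive_prim_rec1)
  then have "total_recursive 1 (\<lambda>xs. if 1 \<le> b (xs ! 0) (rec_nat 0 step (xs ! 0)) then 1 else 0)"
    by (intro total_recursive_if_le total_recursive_const total_recursive_comp2[OF rec]
        total_recursive_proj) simp_all
  moreover have
    "(if \<omega> n then 1 else 0 :: nat) = (if 1 \<le> b n (rec_nat 0 step n) then 1 else 0)" for n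
    using next_bit[of n] by (simp add: code Suc_le_eq)
  ultimately show ?thesis
    unfolding recursive_path_def computable_iff_total_recursive by simp
qed

section \<open>The greedy path of a supermartingale\<close>

lemma supermartingale_half_smaller_child:
  assumes "supermartingale_half M"
  shows "M (t @ [M (t @ [True]) \<le> M (t @ [False])]) \<le> M t"
proof -
  have "(1/2) * M (t @ [True]) + (1/2) * M (t @ [False]) \<le> M t"
    using assms unfolding supermartingale_half_def by blast
  then show ?thesis
    by (cases "M (t @ [True]) \<le> M (t @ [False])") auto
qed

lemma supermartingale_half_greedy_path_bounded:
  assumes "supermartingale_half M"
    and start: "\<And>n. n \<le> L \<Longrightarrow> M (prefix_of \<omega> n) \<le> y"
    and greedy: "\<And>n. L \<le> n \<Longrightarrow>
      \<omega> n \<longleftrightarrow> M (prefix_of \<omega> n @ [True]) \<le> M (prefix_of \<omega> n @ [False])"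
  shows "M (prefix_of \<omega> n) \<le> y"
proof (induction n)
  case 0
  then show ?case using start[of 0] by simp
next
  case (Suc n)
  show ?case
  proof (cases "Suc n \<le> L")
    case True
    then show ?thesis using start by blast
  next
    case False
    then have "M (prefix_of \<omega> (Suc n)) \<le> M (prefix_of \<omega> n)"
      using supermartingale_half_smaller_child[OF assms(1)] greedy[of n]
      by (simp add: prefix_of_Suc)
    with Suc.IH show ?thesis by linarith
  qed
qed

definition greedy_next_bit :: "bool list \<Rightarrow> (bool list \<Rightarrow> real) \<Rightarrow> nat \<Rightarrow> bool list \<Rightarrow> bool"
  where "greedy_next_bit s M n t =
    (if n < length s then s ! n else M (t @ [True]) \<le> M (t @ [False]))"

lemma prefix_of_greedy_path:
  assumes "\<And>n. \<omega> n \<longleftrightarrow> greedy_next_bit s M n (prefix_of \<omega> n)" and "n \<le> length s"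
  shows "prefix_of \<omega> n = take n s"
  using assms(2)
  by (induction n) (simp_all add: prefix_of_Suc assms(1) greedy_next_bit_def take_Suc_conv_app_nth)

lemma recursive_path_greedy:
  assumes "recursive_rational M"
    and \<omega>: "\<And>n. \<omega> n \<longleftrightarrow> greedy_next_bit s M n (prefix_of \<omega> n)"
  shows "recursive_path \<omega>"
proof -
  obtain le where le_recursive: "total_recursive 2 (\<lambda>xs. le (xs ! 0) (xs ! 1))"
    and le_iff: "\<And>s t. 0 < le (enc_str s) (enc_str t) \<longleftrightarrow> M s \<le> M t"
    using recursive_rational_le_decidable[OF assms(1)] by blast
  define bits where "bits = (map of_bool s :: nat list)"
  \<comment> \<open>\<open>x + 2 ^ n * 2\<close> and \<open>x + 2 ^ n\<close> are the codes of the children of the string of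
    length \<open>n\<close> with code \<open>x\<close>.\<close>
  define b where "b n x = (if length s \<le> n then le (x + 2 ^ n * 2) (x + 2 ^ n)
    else if n < length bits then bits ! n else 0)" for n x
  have "total_recursive 2 (\<lambda>xs. le (xs ! 1 + 2 ^ (xs ! 0) * 2) (xs ! 1 + 2 ^ (xs ! 0)))"
    by (intro total_recursive_comp2[OF le_recursive] total_recursive_add total_recursive_mult
        total_recursive_pow2 total_recursive_const total_recursive_proj) simp_all
  moreover have "total_recursive 2 (\<lambda>xs. if xs ! 0 < length bits then bits ! (xs ! 0) else 0)"
    using total_recursive_comp1[OF total_recursive_lookup total_recursive_proj[of 0 2]] by simp
  ultimately have "total_recursive 2 (\<lambda>xs. b (xs ! 0) (xs ! 1))"
    unfolding b_def
    by (intro total_recursive_if_le total_recursive_const total_recursive_proj) simp_all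
  moreover have "\<omega> n \<longleftrightarrow> 0 < b n (enc_str (prefix_of \<omega> n))" for n
    using \<omega>[of n] le_iff[of "prefix_of \<omega> n @ [True]" "prefix_of \<omega> n @ [False]"]
    by (simp add: greedy_next_bit_def b_def bits_def enc_str_snoc)
  ultimately show ?thesis
    by (rule recursive_path_if_next_bit_recursive)
qed

theorem lemma7:
  fixes M :: "bool list \<Rightarrow> real" and y :: real and s :: "bool list"
  assumes "recursive_rational M"
    and "\<forall>t. M t > 0"
    and "supermartingale_half M"
    and "y > 0"
    and "\<forall>n\<le>length s. M (take n s) \<le> y"
  shows "\<exists>\<omega>. recursive_path \<omega> \<and> prefix_of \<omega> (length s) = s \<and>
             (\<forall>n. M (prefix_of \<omega> n) \<le> y)"
proof -
  obtain \<omega> where \<omega>: "\<And>n. \<omega> n \<longleftrightarrow> greedy_next_bit s M n (prefix_of \<omega> n)"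
    using exists_path_next_bit_rule[of "greedy_next_bit s M"] by blast
  have "M (prefix_of \<omega> n) \<le> y" for n
  proof (rule supermartingale_half_greedy_path_bounded[OF assms(3)])
    show "M (prefix_of \<omega> k) \<le> y" if "k \<le> length s" for k
      using that assms(5) prefix_of_greedy_path[OF \<omega> that] by simp
    show "\<omega> k \<longleftrightarrow> M (prefix_of \<omega> k @ [True]) \<le> M (prefix_of \<omega> k @ [False])"
      if "length s \<le> k" for k
      using that \<omega>[of k] by (simp add: greedy_next_bit_def)
  qed
  moreover have "prefix_of \<omega> (length s) = s"
    using prefix_of_greedy_path[OF \<omega>, of "length s"] by simp
  moreover have "recursive_path \<omega>"
    using recursive_path_greedy[OF assms(1) \<omega>] .
  ultimately show ?thesis
    by blast
qed

end
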